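(* Let $\Pi$ be a positive semidefinite operator on $(\mathbb{C}^2)^{\otimes n}$ with $\Pi\le\mathbb{1}$ (a POVM element) that has at least one nonzero off-diagonal entry with respect to the computational basis. Then there exist phases $\theta_{\bm{y}}\in[0,2\pi]$, $\bm{y}\in\{0,1\}^n$, such that for $|\psi\rangle=\frac{1}{\sqrt{2^n}}\sum_{\bm{y}}e^{i\theta_{\bm{y}}}|\bm{y}\rangle$ and $W_\psi=\frac{1}{2^n}\mathbb{1}-|\psi\rangle\langle\psi|$ one has $\operatorname{tr}[W_\psi\Pi]\neq 0$.
   Context: $\{|\bm{y}\rangle:\bm{y}\in\{0,1\}^n\}$ is the computational basis of the $n$-qubit space. $W_\psi$ is called the $\psi$-induced quantum noise witness, and it "detects" $\Pi$ when $\operatorname{tr}[W_\psi\Pi]\ne0$. *)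

theory Defs
  imports "HOL-Analysis.Analysis"
begin

text \<open>Operators on the n-qubit space: complex matrices indexed by the computational
  basis {0,1}^n, modelled as the finite type 'n \<Rightarrow> bool with n = CARD('n).\<close>

definition quad_form :: "complex^'m^'m \<Rightarrow> complex^'m \<Rightarrow> complex" where
  "quad_form A v = (\<Sum>i\<in>UNIV. \<Sum>j\<in>UNIV. cnj (v $ i) * (A $ i $ j) * v $ j)"

definition psd :: "complex^'m^'m \<Rightarrow> bool" where
  "psd A \<longleftrightarrow> (\<forall>v. Im (quad_form A v) = 0 \<and> Re (quad_form A v) \<ge> 0)"

definition phase_state :: "(('n::finite \<Rightarrow> bool) \<Rightarrow> real) \<Rightarrow> complex^('n \<Rightarrow> bool)" where
  "phase_state \<theta> = (\<chi> y. complex_of_real (1 / sqrt (2 ^ CARD('n))) * exp (\<i> * complex_of_real (\<theta> y)))"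

definition ketbra :: "complex^'m \<Rightarrow> complex^'m^'m" where
  "ketbra \<psi> = (\<chi> i j. \<psi> $ i * cnj (\<psi> $ j))"

definition witness :: "(('n::finite \<Rightarrow> bool) \<Rightarrow> real) \<Rightarrow> complex^('n \<Rightarrow> bool)^('n \<Rightarrow> bool)" where
  "witness \<theta> = mat (complex_of_real (1 / 2 ^ CARD('n))) - ketbra (phase_state \<theta>)"

end

theory Submission
  imports Defs
begin

text \<open>With the unnormalised phase vector \<open>e\<^sub>y = exp(i\<theta>\<^sub>y)\<close> one has
  \<open>tr[W\<^sub>\<psi>\<Pi>] = 2\<^sup>-\<^sup>n (tr \<Pi> - \<langle>e|\<Pi>|e\<rangle>)\<close>. Fix two basis labels \<open>y \<noteq> z\<close>, put the
  phases \<open>u, v\<close> at \<open>y, z\<close> and \<open>1\<close> elsewhere. If no witness detects \<open>\<Pi>\<close>, then \<open>\<langle>e|\<Pi>|e\<rangle>\<close>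
  is the same constant for all \<open>u, v\<close> among the fourth roots of unity; its Fourier coefficient
  at \<open>u v\<^sup>*\<close> is therefore \<open>0\<close>, but that coefficient is \<open>16 \<Pi>\<^sub>y\<^sub>z\<close>.\<close>

definition fourth_roots_of_unity :: "complex set" where
  "fourth_roots_of_unity = {1, \<i>, -1, -\<i>}"

definition two_phase_vector :: "'m \<Rightarrow> 'm \<Rightarrow> complex \<Rightarrow> complex \<Rightarrow> complex^'m" where
  "two_phase_vector y z u v = (\<chi> k. if k = y then u else if k = z then v else 1)"

lemma trace_witness_mult:
  fixes P :: "complex^('n::finite \<Rightarrow> bool)^('n \<Rightarrow> bool)"
  shows "trace (witness \<theta> ** P) = complex_of_real (1 / 2 ^ CARD('n)) *
           (trace P - quad_form P (\<chi> y. exp (\<i> * complex_of_real (\<theta> y))))"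
proof -
  define c where "c = complex_of_real (1 / 2 ^ CARD('n))"
  define e where "e = (\<lambda>y. exp (\<i> * complex_of_real (\<theta> y)))"
  have ketbra_entry: "ketbra (phase_state \<theta>) $ i $ k = c * (e i * cnj (e k))" for i k
  proof -
    have "complex_of_real (1 / sqrt (2 ^ CARD('n))) * complex_of_real (1 / sqrt (2 ^ CARD('n))) = c"
      unfolding c_def by (simp flip: of_real_mult)
    then show ?thesis
      by (simp add: ketbra_def phase_state_def e_def flip: \<open>_ = c\<close>)
  qed
  have "trace (witness \<theta> ** P) = (\<Sum>i\<in>UNIV. \<Sum>k\<in>UNIV. ((if i = k then c else 0) - c * (e i * cnj (e k))) * P$k$i)"
    unfolding trace_def matrix_matrix_mult_def witness_def c_def[symmetric]
    by (simp add: mat_def ketbra_entry)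
  also have "\<dots> = c * (\<Sum>i\<in>UNIV. P$i$i) - c * (\<Sum>i\<in>UNIV. \<Sum>k\<in>UNIV. cnj (e k) * P$k$i * e i)"
  proof -
    have "((if i = k then c else 0) - c * (e i * cnj (e k))) * P$k$i
          = (if k = i then c * P$i$i else 0) - c * (cnj (e k) * P$k$i * e i)" for i k
      by (cases "i = k") (simp_all add: algebra_simps)
    then show ?thesis
      by (simp only: sum_subtractf sum_distrib_left sum.delta finite UNIV_I if_True)
  qed
  also have "(\<Sum>i\<in>UNIV. \<Sum>k\<in>UNIV. cnj (e k) * P$k$i * e i) = quad_form P (\<chi> y. e y)"
    unfolding quad_form_def vec_lambda_beta by (rule sum.swap)
  finally show ?thesis
    by (simp add: trace_def c_def e_def right_diff_distrib)
qed

lemma fourth_root_of_unity_character_sum: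
  assumes "y \<noteq> z"
  shows "(\<Sum>u\<in>fourth_roots_of_unity. \<Sum>v\<in>fourth_roots_of_unity.
            u * cnj v * (cnj (two_phase_vector y z u v $ k) * two_phase_vector y z u v $ i))
         = (if k = y \<and> i = z then 16 else 0)"
  using assms
  by (cases "k = y"; cases "k = z"; cases "i = y"; cases "i = z")
     (simp_all add: fourth_roots_of_unity_def two_phase_vector_def complex_eq_iff)

lemma quad_form_two_phase_vector_fourier_coefficient:
  fixes A :: "complex^'m::finite^'m"
  assumes "y \<noteq> z"
  shows "(\<Sum>u\<in>fourth_roots_of_unity. \<Sum>v\<in>fourth_roots_of_unity.
            u * cnj v * quad_form A (two_phase_vector y z u v)) = 16 * A$y$z"
proof -
  let ?F = fourth_roots_of_unity and ?w = "two_phase_vector y z"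
  have "(\<Sum>u\<in>?F. \<Sum>v\<in>?F. u * cnj v * quad_form A (?w u v))
      = (\<Sum>k\<in>UNIV. \<Sum>i\<in>UNIV. A$k$i *
           (\<Sum>u\<in>?F. \<Sum>v\<in>?F. u * cnj v * (cnj (?w u v $ k) * ?w u v $ i)))"
    unfolding quad_form_def sum_distrib_left
    by (simp only: sum.swap[of _ ?F UNIV]) (simp add: mult_ac)
  also have "\<dots> = 16 * A$y$z"
    using assms
    by (simp add: fourth_root_of_unity_character_sum if_distrib[of "times _"] sum.delta'
        conj_commute[of "_ = y"] flip: if_if_eq_conj cong: if_cong)
  finally show ?thesis .
qed

lemma sum_fourth_roots_of_unity: "(\<Sum>u\<in>fourth_roots_of_unity. u) = 0"
  by (simp add: fourth_roots_of_unity_def complex_eq_iff)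

lemma off_diagonal_entry_eq_0_if_quad_form_two_phase_vector_const:
  fixes A :: "complex^'m::finite^'m"
  assumes "y \<noteq> z"
    and const: "\<And>u v. u \<in> fourth_roots_of_unity \<Longrightarrow> v \<in> fourth_roots_of_unity \<Longrightarrow>
                  quad_form A (two_phase_vector y z u v) = c"
  shows "A$y$z = 0"
proof -
  let ?F = fourth_roots_of_unity
  have "16 * A$y$z = (\<Sum>u\<in>?F. \<Sum>v\<in>?F. u * cnj v * c)"
    using const by (simp add: quad_form_two_phase_vector_fourier_coefficient[OF \<open>y \<noteq> z\<close>, symmetric])
  also have "\<dots> = (\<Sum>u\<in>?F. u) * (\<Sum>v\<in>?F. cnj v) * c"
    by (subst sum_product) (simp only: sum_distrib_right)
  finally show ?thesis
    by (simp add: sum_fourth_roots_of_unity flip: cnj_sum)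
qed

lemma exists_phases_two_phase_vector:
  assumes "norm u = 1" "norm v = 1"
  obtains \<theta> :: "'m::finite \<Rightarrow> real"
  where "\<forall>k. 0 \<le> \<theta> k \<and> \<theta> k \<le> 2 * pi"
    and "(\<chi> k. exp (\<i> * complex_of_real (\<theta> k))) = two_phase_vector y z u v"
proof
  let ?\<theta> = "\<lambda>k. if k = y then Arg2pi u else if k = z then Arg2pi v else 0"
  show "\<forall>k. 0 \<le> ?\<theta> k \<and> ?\<theta> k \<le> 2 * pi"
    using Arg2pi[of u] Arg2pi[of v] by auto
  show "(\<chi> k. exp (\<i> * complex_of_real (?\<theta> k))) = two_phase_vector y z u v"
    using assms by (auto simp: two_phase_vector_def complex_norm_eq_1_exp vec_eq_iff)
qed

theorem proposition2:
  fixes P :: "complex^('n::finite \<Rightarrow> bool)^('n \<Rightarrow> bool)"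
  assumes "psd P"
    and "psd (mat 1 - P)"
    and "\<exists>y z. y \<noteq> z \<and> P $ y $ z \<noteq> 0"
  shows "\<exists>\<theta> :: ('n \<Rightarrow> bool) \<Rightarrow> real. (\<forall>y. 0 \<le> \<theta> y \<and> \<theta> y \<le> 2 * pi) \<and>
           trace (witness \<theta> ** P) \<noteq> 0"
proof (rule ccontr)
  assume undetected: "\<not> ?thesis"
  obtain y z where "y \<noteq> z" and "P $ y $ z \<noteq> 0"
    using assms(3) by blast
  have "quad_form P (two_phase_vector y z u v) = trace P"
    if "u \<in> fourth_roots_of_unity" "v \<in> fourth_roots_of_unity" for u v
  proof -
    have "norm u = 1" "norm v = 1"
      using that by (auto simp: fourth_roots_of_unity_def)
    then obtain \<theta> where "\<forall>k. 0 \<le> \<theta> k \<and> \<theta> k \<le> 2 * pi"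
      and phases: "(\<chi> k. exp (\<i> * complex_of_real (\<theta> k))) = two_phase_vector y z u v"
      by (rule exists_phases_two_phase_vector)
    with undetected have "trace (witness \<theta> ** P) = 0"
      by blast
    then show ?thesis
      by (simp add: trace_witness_mult phases)
  qed
  then have "P $ y $ z = 0"
    using off_diagonal_entry_eq_0_if_quad_form_two_phase_vector_const[OF \<open>y \<noteq> z\<close>] by blast
  with \<open>P $ y $ z \<noteq> 0\<close> show False ..
qed

end
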